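(* Let $J$ and $K$ be nonempty standard subsets of $\{1,\dots,t\}$ such that for every $i\in K$ we have $i\in J$ or $i-1\in J$. Then $\mathrm{Ext}^1_{\mathcal A_{t,1}}(\Delta(K),\Delta(J))=0$.
   Context: Let $k$ be an algebraically closed field and $t\ge 3$ an integer. $\mathcal A_{t,1}$ is the quotient of the path algebra over $k$ of the quiver with vertices $1,\dots,t$, arrows $\alpha_i:i\to i+1$ ($1\le i\le t-1$) and $\beta_j:j+2\to j$ ($1\le j\le t-2$), by the relations $\beta_1\alpha_2=0$ and $\beta_{i+1}\alpha_{i+2}=\alpha_i\beta_i$ for $1\le i\le t-3$ (compositions of linear maps, written right to left). Modules are finite-dimensional and identified with representations $(M_i;\alpha_i,\beta_j)$ of the quiver satisfying these relations. A subset $J\subseteq\{1,\dots,t\}$ is standard if $j\in J$ implies $j+1\notin J$. For a nonempty standard subset $J$, the standard module $\Delta(J)$ has $\Delta(J)_i=k^{l}$ where $l=\#\{j\in J: j\le i\}$, with standard basis $e_1,\dots,e_l$; each $\alpha_i$ is the natural inclusion $e_h\mapsto e_h$, and each $\beta_j$ sends $e_h\mapsto e_{h-1}$ for $h\ge 2$ and $e_1\mapsto 0$. *)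

theory Defs
  imports "Jordan_Normal_Form.Matrix" "HOL-Computational_Algebra.Polynomial"
begin

text \<open>A finite-dimensional representation of the quiver of A_{t,1} in coordinates:
  dimension vector d (vertex i has space k^(d i), i in 1..t), matrices al i (for alpha_i : i -> i+1)
  and be j (for beta_j : j+2 -> j).\<close>
type_synonym 'a rep = "(nat \<Rightarrow> nat) \<times> (nat \<Rightarrow> 'a mat) \<times> (nat \<Rightarrow> 'a mat)"

definition alg_closed_field :: "'a::field itself \<Rightarrow> bool" where
  "alg_closed_field _ \<longleftrightarrow> (\<forall>p::'a poly. degree p > 0 \<longrightarrow> (\<exists>x. poly p x = 0))"

definition is_rep :: "nat \<Rightarrow> 'a::field rep \<Rightarrow> bool" where
  "is_rep t M \<longleftrightarrow> (case M of (d, al, be) \<Rightarrow>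
     (\<forall>i\<in>{1..t-1}. al i \<in> carrier_mat (d (i+1)) (d i)) \<and>
     (\<forall>j\<in>{1..t-2}. be j \<in> carrier_mat (d j) (d (j+2))) \<and>
     be 1 * al 2 = 0\<^sub>m (d 1) (d 2) \<and>
     (\<forall>i\<in>{1..t-3}. be (i+1) * al (i+2) = al i * be i))"

definition is_hom :: "nat \<Rightarrow> 'a::field rep \<Rightarrow> 'a rep \<Rightarrow> (nat \<Rightarrow> 'a mat) \<Rightarrow> bool" where
  "is_hom t M N f \<longleftrightarrow> (case M of (d, al, be) \<Rightarrow> case N of (d', al', be') \<Rightarrow>
     (\<forall>i\<in>{1..t}. f i \<in> carrier_mat (d' i) (d i)) \<and>
     (\<forall>i\<in>{1..t-1}. f (i+1) * al i = al' i * f i) \<and>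
     (\<forall>j\<in>{1..t-2}. f j * be j = be' j * f (j+2)))"

definition short_exact :: "nat \<Rightarrow> 'a::field rep \<Rightarrow> 'a rep \<Rightarrow> 'a rep
    \<Rightarrow> (nat \<Rightarrow> 'a mat) \<Rightarrow> (nat \<Rightarrow> 'a mat) \<Rightarrow> bool" where
  "short_exact t M E N f g \<longleftrightarrow>
     is_hom t M E f \<and> is_hom t E N g \<and>
     (\<forall>i\<in>{1..t}.
        (\<forall>v\<in>carrier_vec (fst M i). f i *\<^sub>v v = 0\<^sub>v (fst E i) \<longrightarrow> v = 0\<^sub>v (fst M i)) \<and>
        (\<forall>w\<in>carrier_vec (fst N i). \<exists>v\<in>carrier_vec (fst E i). g i *\<^sub>v v = w) \<and>
        (\<forall>v\<in>carrier_vec (fst E i).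
           g i *\<^sub>v v = 0\<^sub>v (fst N i) \<longleftrightarrow> (\<exists>u\<in>carrier_vec (fst M i). f i *\<^sub>v u = v)))"

text \<open>Ext^1(N, M) = 0: every short exact sequence 0 -> M -> E -> N -> 0 of representations splits
  (g has a section which is a homomorphism). Every finite-dimensional module is isomorphic to a
  coordinate representation, so quantifying over coordinate representations E suffices.\<close>
definition ext1_zero :: "nat \<Rightarrow> 'a::field rep \<Rightarrow> 'a rep \<Rightarrow> bool" where
  "ext1_zero t N M \<longleftrightarrow>
     (\<forall>E f g. is_rep t E \<and> short_exact t M E N f g \<longrightarrow>
        (\<exists>s. is_hom t N E s \<and> (\<forall>i\<in>{1..t}. g i * s i = 1\<^sub>m (fst N i))))"

definition standard_subset :: "nat \<Rightarrow> nat set \<Rightarrow> bool" where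
  "standard_subset t J \<longleftrightarrow> J \<subseteq> {1..t} \<and> (\<forall>j\<in>J. j + 1 \<notin> J)"

text \<open>Standard module Delta(J): dimension l_i = #{j in J. j <= i}; basis e_1..e_l is indexed 0..l-1.
  alpha_i is the natural inclusion, beta_j sends e_h to e_(h-1) (e_1 to 0).\<close>
definition std_dim :: "nat set \<Rightarrow> nat \<Rightarrow> nat" where
  "std_dim J i = card {j\<in>J. j \<le> i}"

definition std_module :: "nat set \<Rightarrow> 'a::field rep" where
  "std_module J = (std_dim J,
     (\<lambda>i. mat (std_dim J (i+1)) (std_dim J i) (\<lambda>(r,c). if r = c then 1 else 0)),
     (\<lambda>j. mat (std_dim J j) (std_dim J (j+2)) (\<lambda>(r,c). if c = r + 1 then 1 else 0)))"

end

theory Submission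
  imports Defs
begin

(* A section of g : E -> Delta(K) is built one basis vector of Delta(K) at a time. The basis
   vector e_c (counted from 0, as in std_module) first appears at the vertex k where K reaches
   c + 1 elements, and beta_(k-2) sends it to e_(c-1). Lift e_c at k to some z with
   beta_(k-2) z equal to the lift already chosen for e_(c-1): the discrepancy of an arbitrary
   lift lies in ker g = im f, and it can be removed because k or k - 1 lies in J, which makes
   beta_(k-2) : Delta(J)_k -> Delta(J)_(k-2) surjective. Transporting z along the alphas gives
   the lift at all later vertices; the relations beta_(i+1) alpha_(i+2) = alpha_i beta_i and
   beta_1 alpha_2 = 0 keep it compatible with beta. *)

lemma std_dim_Suc: "std_dim J (Suc i) = std_dim J i + (if Suc i \<in> J then 1 else 0)"
proof -
  have "{j\<in>J. j \<le> Suc i} = (if Suc i \<in> J then insert (Suc i) {j\<in>J. j \<le> i} else {j\<in>J. j \<le> i})"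
    by (auto simp: le_Suc_eq)
  then show ?thesis unfolding std_dim_def by auto
qed

lemma std_dim_0: "standard_subset t J \<Longrightarrow> std_dim J 0 = 0"
  unfolding std_dim_def standard_subset_def by auto

lemma std_dim_mono: "i \<le> j \<Longrightarrow> std_dim J i \<le> std_dim J j"
  unfolding std_dim_def by (rule card_mono) auto

lemma std_dim_add_two_le: "standard_subset t J \<Longrightarrow> std_dim J (i + 2) \<le> std_dim J i + 1"
  using std_dim_Suc[of J "Suc i"] std_dim_Suc[of J i] by (auto simp: standard_subset_def)

lemma std_dim_less_add_two: "i + 1 \<in> J \<or> i + 2 \<in> J \<Longrightarrow> std_dim J i < std_dim J (i + 2)"
  using std_dim_Suc[of J "Suc i"] std_dim_Suc[of J i] by auto

lemma std_dim_first_vertex: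
  assumes J: "standard_subset t J" and n: "n < std_dim J t"
  obtains k where "k \<in> J" "k \<le> t" "\<And>i. n < std_dim J i \<longleftrightarrow> k \<le> i"
proof
  define k where "k = (LEAST i. n < std_dim J i)"
  have nk: "n < std_dim J k" unfolding k_def using n by (rule LeastI)
  show above: "n < std_dim J i \<longleftrightarrow> k \<le> i" for i
  proof
    assume "n < std_dim J i" then show "k \<le> i" unfolding k_def by (rule Least_le)
  next
    assume "k \<le> i" then show "n < std_dim J i" using nk std_dim_mono[of k i J] by linarith
  qed
  then show "k \<le> t" using n by blast
  have "k \<noteq> 0"
  proof
    assume "k = 0" then show False using nk std_dim_0[OF J] by simp
  qed
  then have "std_dim J k = std_dim J (k - 1) + (if k \<in> J then 1 else 0)"
    using std_dim_Suc[of J "k - 1"] by simp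
  moreover have "\<not> k \<le> k - 1" using \<open>k \<noteq> 0\<close> by arith
  then have "std_dim J (k - 1) \<le> n" using above[of "k - 1"] by simp
  ultimately show "k \<in> J" using nk by (auto split: if_splits)
qed

definition incl_mat :: "(nat \<Rightarrow> nat) \<Rightarrow> nat \<Rightarrow> 'a::field mat" where
  "incl_mat D i = mat (D (i + 1)) (D i) (\<lambda>(r, c). if r = c then 1 else 0)"

definition shift_mat :: "(nat \<Rightarrow> nat) \<Rightarrow> nat \<Rightarrow> 'a::field mat" where
  "shift_mat D j = mat (D j) (D (j + 2)) (\<lambda>(r, c). if c = r + 1 then 1 else 0)"

lemma std_module_eq: "std_module J = (std_dim J, incl_mat (std_dim J), shift_mat (std_dim J))"
  unfolding std_module_def incl_mat_def shift_mat_def by simp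

lemma incl_mat_carrier [simp]: "incl_mat D i \<in> carrier_mat (D (i + 1)) (D i)"
  by (simp add: incl_mat_def)

lemma shift_mat_carrier [simp]: "shift_mat D j \<in> carrier_mat (D j) (D (j + 2))"
  by (simp add: shift_mat_def)

lemma col_incl_mat: "c < D i \<Longrightarrow> col (incl_mat D i) c = unit_vec (D (i + 1)) c"
  by (auto simp: incl_mat_def unit_vec_def)

lemma col_shift_mat:
  "c < D (j + 2) \<Longrightarrow> col (shift_mat D j) c = (if c = 0 then 0\<^sub>v (D j) else unit_vec (D j) (c - 1))"
  by (rule eq_vecI) (auto simp: shift_mat_def unit_vec_def)

lemma shift_mat_surj:
  assumes "D j < D (j + 2)" and u: "u \<in> carrier_vec (D j)"
  obtains m where "m \<in> carrier_vec (D (j + 2))" "shift_mat D j *\<^sub>v m = u"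
proof
  define m where "m = vec (D (j + 2)) (\<lambda>r. if r = 0 then 0 else u $ (r - 1))"
  show "m \<in> carrier_vec (D (j + 2))" by (simp add: m_def)
  show "shift_mat D j *\<^sub>v m = u"
  proof (rule eq_vecI)
    fix r assume "r < dim_vec u"
    then have r: "r < D j" using u by simp
    have row: "row (shift_mat D j) r = unit_vec (D (j + 2)) (r + 1)"
      using r by (auto simp: shift_mat_def unit_vec_def)
    have "(shift_mat D j *\<^sub>v m) $ r = row (shift_mat D j) r \<bullet> m"
      using r by (intro index_mult_mat_vec) (simp add: shift_mat_def)
    also have "\<dots> = unit_vec (D (j + 2)) (r + 1) \<bullet> m" by (simp only: row)
    also have "\<dots> = m $ (r + 1)"
      using r assms(1) by (intro scalar_prod_left_unit) (auto simp: m_def)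
    finally show "(shift_mat D j *\<^sub>v m) $ r = u $ r" using r assms(1) by (simp add: m_def)
  qed (use u in \<open>simp add: shift_mat_def\<close>)
qed

lemma zero_mat_mult_vec [simp]:
  "v \<in> carrier_vec nc \<Longrightarrow> 0\<^sub>m nr nc *\<^sub>v v = (0\<^sub>v nr :: 'a::semiring_0 vec)"
  by (intro eq_vecI) auto

lemma mult_mat_vec_zero [simp]:
  "A \<in> carrier_mat nr nc \<Longrightarrow> A *\<^sub>v 0\<^sub>v nc = (0\<^sub>v nr :: 'a::semiring_0 vec)"
  by (intro eq_vecI) auto

lemma mult_unit_vec_eq_col:
  "(A :: 'a::semiring_1 mat) \<in> carrier_mat nr nc \<Longrightarrow> c < nc \<Longrightarrow> A *\<^sub>v unit_vec nc c = col A c"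
  by (intro eq_vecI) auto

lemma incl_mat_mult_unit_vec:
  "c < D i \<Longrightarrow> incl_mat D i *\<^sub>v unit_vec (D i) c = unit_vec (D (i + 1)) c"
  by (simp add: mult_unit_vec_eq_col[OF incl_mat_carrier[of D i]] col_incl_mat)

lemma shift_mat_mult_unit_vec:
  "c < D (j + 2) \<Longrightarrow> shift_mat D j *\<^sub>v unit_vec (D (j + 2)) c
     = (if c = 0 then 0\<^sub>v (D j) else unit_vec (D j) (c - 1))"
proof -
  assume c: "c < D (j + 2)"
  have "shift_mat D j *\<^sub>v unit_vec (D (j + 2)) c = (col (shift_mat D j) c :: 'a vec)"
    using mult_unit_vec_eq_col[OF shift_mat_carrier[of D j] c] .
  then show ?thesis using col_shift_mat[of c D j, OF c] by simp
qed

primrec chain_mult_vec :: "(nat \<Rightarrow> 'a::semiring_0 mat) \<Rightarrow> nat \<Rightarrow> 'a vec \<Rightarrow> nat \<Rightarrow> 'a vec" where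
  "chain_mult_vec A k v 0 = v"
| "chain_mult_vec A k v (Suc d) = A (k + d) *\<^sub>v chain_mult_vec A k v d"

lemma chain_mult_vec_Suc_diff:
  "k \<le> i \<Longrightarrow> chain_mult_vec A k v (Suc i - k) = A i *\<^sub>v chain_mult_vec A k v (i - k)"
  by (simp add: Suc_diff_le)

locale standard_extension =
  fixes t :: nat and J K :: "nat set" and dE :: "nat \<Rightarrow> nat"
    and aE bE f g :: "nat \<Rightarrow> 'a::field mat"
  assumes t3: "3 \<le> t" and K: "standard_subset t K"
    and K_covered: "\<forall>i\<in>K. i \<in> J \<or> i - 1 \<in> J"
    and rep: "is_rep t (dE, aE, bE)"
    and ses: "short_exact t (std_module J :: 'a rep) (dE, aE, bE) (std_module K) f g"
begin

abbreviation "dJ \<equiv> std_dim J"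
abbreviation "dK \<equiv> std_dim K"

lemma aE_carrier: "i \<in> {1..t-1} \<Longrightarrow> aE i \<in> carrier_mat (dE (i + 1)) (dE i)"
  using rep by (simp add: is_rep_def)

lemma bE_carrier: "j \<in> {1..t-2} \<Longrightarrow> bE j \<in> carrier_mat (dE j) (dE (j + 2))"
  using rep by (simp add: is_rep_def)

lemma f_carrier: "i \<in> {1..t} \<Longrightarrow> f i \<in> carrier_mat (dE i) (dJ i)"
  using ses by (simp add: short_exact_def is_hom_def std_module_eq)

lemma g_carrier: "i \<in> {1..t} \<Longrightarrow> g i \<in> carrier_mat (dK i) (dE i)"
  using ses by (simp add: short_exact_def is_hom_def std_module_eq)

lemma bE_1_aE_2_vec:
  assumes "v \<in> carrier_vec (dE 2)"
  shows "bE 1 *\<^sub>v (aE 2 *\<^sub>v v) = 0\<^sub>v (dE 1)"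
proof -
  have "bE 1 \<in> carrier_mat (dE 1) (dE (2 + 1))" "aE 2 \<in> carrier_mat (dE (2 + 1)) (dE 2)"
    using bE_carrier[of 1] aE_carrier[of 2] t3 by (auto simp: numeral_3_eq_3)
  then have "bE 1 *\<^sub>v (aE 2 *\<^sub>v v) = (bE 1 * aE 2) *\<^sub>v v" using assms by simp
  also have "\<dots> = 0\<^sub>v (dE 1)" using rep assms by (simp add: is_rep_def)
  finally show ?thesis .
qed

lemma bE_aE_vec:
  assumes j: "j \<in> {1..t-3}" and v: "v \<in> carrier_vec (dE (j + 2))"
  shows "bE (j + 1) *\<^sub>v (aE (j + 2) *\<^sub>v v) = aE j *\<^sub>v (bE j *\<^sub>v v)"
proof -
  have "j + 1 \<in> {1..t-2}" "j + 2 \<in> {1..t-1}" "j \<in> {1..t-1}" "j \<in> {1..t-2}" using j by auto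
  note carriers =
    bE_carrier[OF this(1)] aE_carrier[OF this(2)] aE_carrier[OF this(3)] bE_carrier[OF this(4)]
  have "bE (j + 1) *\<^sub>v (aE (j + 2) *\<^sub>v v) = (bE (j + 1) * aE (j + 2)) *\<^sub>v v"
    using carriers v by (simp add: ac_simps)
  also have "\<dots> = (aE j * bE j) *\<^sub>v v" using rep j by (simp add: is_rep_def)
  also have "\<dots> = aE j *\<^sub>v (bE j *\<^sub>v v)" using carriers v by simp
  finally show ?thesis .
qed

lemma g_aE_vec:
  assumes i: "i \<in> {1..t-1}" and v: "v \<in> carrier_vec (dE i)"
  shows "g (i + 1) *\<^sub>v (aE i *\<^sub>v v) = incl_mat dK i *\<^sub>v (g i *\<^sub>v v)"
proof -
  have "i + 1 \<in> {1..t}" "i \<in> {1..t}" using i by auto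
  note carriers = g_carrier[OF this(1)] g_carrier[OF this(2)] aE_carrier[OF i]
  have "g (i + 1) *\<^sub>v (aE i *\<^sub>v v) = (g (i + 1) * aE i) *\<^sub>v v" using carriers v by simp
  also have "\<dots> = (incl_mat dK i * g i) *\<^sub>v v"
    using ses i by (simp add: short_exact_def is_hom_def std_module_eq)
  also have "\<dots> = incl_mat dK i *\<^sub>v (g i *\<^sub>v v)"
    using assoc_mult_mat_vec[OF incl_mat_carrier[of dK i] carriers(2) v] .
  finally show ?thesis .
qed

lemma g_bE_vec:
  assumes j: "j \<in> {1..t-2}" and v: "v \<in> carrier_vec (dE (j + 2))"
  shows "g j *\<^sub>v (bE j *\<^sub>v v) = shift_mat dK j *\<^sub>v (g (j + 2) *\<^sub>v v)"
proof -
  have "j \<in> {1..t}" "j + 2 \<in> {1..t}" using j by auto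
  note carriers = g_carrier[OF this(1)] g_carrier[OF this(2)] bE_carrier[OF j]
  have "g j *\<^sub>v (bE j *\<^sub>v v) = (g j * bE j) *\<^sub>v v" using carriers v by simp
  also have "\<dots> = (shift_mat dK j * g (j + 2)) *\<^sub>v v"
    using ses j by (simp add: short_exact_def is_hom_def std_module_eq)
  also have "\<dots> = shift_mat dK j *\<^sub>v (g (j + 2) *\<^sub>v v)"
    using assoc_mult_mat_vec[OF shift_mat_carrier[of dK j] carriers(2) v] .
  finally show ?thesis .
qed

lemma bE_f_vec:
  assumes j: "j \<in> {1..t-2}" and u: "u \<in> carrier_vec (dJ (j + 2))"
  shows "bE j *\<^sub>v (f (j + 2) *\<^sub>v u) = f j *\<^sub>v (shift_mat dJ j *\<^sub>v u)"
proof -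
  have "j \<in> {1..t}" "j + 2 \<in> {1..t}" using j by auto
  note carriers = f_carrier[OF this(1)] f_carrier[OF this(2)] bE_carrier[OF j]
  have "bE j *\<^sub>v (f (j + 2) *\<^sub>v u) = (bE j * f (j + 2)) *\<^sub>v u" using carriers u by simp
  also have "\<dots> = (f j * shift_mat dJ j) *\<^sub>v u"
    using ses j by (simp add: short_exact_def is_hom_def std_module_eq)
  also have "\<dots> = f j *\<^sub>v (shift_mat dJ j *\<^sub>v u)"
    using assoc_mult_mat_vec[OF carriers(1) shift_mat_carrier u] .
  finally show ?thesis .
qed

lemma g_surj:
  "i \<in> {1..t} \<Longrightarrow> w \<in> carrier_vec (dK i) \<Longrightarrow> \<exists>v\<in>carrier_vec (dE i). g i *\<^sub>v v = w"
  using ses by (simp add: short_exact_def std_module_eq)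

lemma ker_g_subset_im_f:
  "i \<in> {1..t} \<Longrightarrow> v \<in> carrier_vec (dE i) \<Longrightarrow> g i *\<^sub>v v = 0\<^sub>v (dK i)
   \<Longrightarrow> \<exists>u\<in>carrier_vec (dJ i). f i *\<^sub>v u = v"
  using ses by (simp add: short_exact_def std_module_eq)

lemma g_f_zero:
  assumes i: "i \<in> {1..t}" and u: "u \<in> carrier_vec (dJ i)"
  shows "g i *\<^sub>v (f i *\<^sub>v u) = 0\<^sub>v (dK i)"
proof -
  have "f i *\<^sub>v u \<in> carrier_vec (dE i)" using f_carrier[OF i] u by simp
  then show ?thesis using ses i u unfolding short_exact_def std_module_eq by auto
qed

lemma correct_along_bE:
  assumes j: "j \<in> {1..t-2}" and bJ_surj: "dJ j < dJ (j + 2)"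
    and w: "w \<in> carrier_vec (dE (j + 2))" and T: "T \<in> carrier_vec (dE j)"
    and same_image: "g j *\<^sub>v T = g j *\<^sub>v (bE j *\<^sub>v w)"
  obtains z where "z \<in> carrier_vec (dE (j + 2))" "g (j + 2) *\<^sub>v z = g (j + 2) *\<^sub>v w"
    "bE j *\<^sub>v z = T"
proof -
  have j': "j \<in> {1..t}" "j + 2 \<in> {1..t}" using j by auto
  have bw: "bE j *\<^sub>v w \<in> carrier_vec (dE j)" using bE_carrier[OF j] w by simp
  then have d: "bE j *\<^sub>v w - T \<in> carrier_vec (dE j)" using T by simp
  have "g j *\<^sub>v (bE j *\<^sub>v w - T) = 0\<^sub>v (dK j)"
    using g_carrier[OF j'(1)] bw T same_image by (simp add: mult_minus_distrib_mat_vec)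
  then obtain u where u: "u \<in> carrier_vec (dJ j)" "f j *\<^sub>v u = bE j *\<^sub>v w - T"
    using ker_g_subset_im_f[OF j'(1) d] by blast
  obtain m where m: "m \<in> carrier_vec (dJ (j + 2))" "shift_mat dJ j *\<^sub>v m = u"
    using shift_mat_surj[OF bJ_surj u(1)] .
  have fm: "f (j + 2) *\<^sub>v m \<in> carrier_vec (dE (j + 2))" using f_carrier[OF j'(2)] m(1) by simp
  show ?thesis
  proof (rule that)
    show "w - f (j + 2) *\<^sub>v m \<in> carrier_vec (dE (j + 2))" using w fm by simp
    show "g (j + 2) *\<^sub>v (w - f (j + 2) *\<^sub>v m) = g (j + 2) *\<^sub>v w"
      using g_carrier[OF j'(2)] w fm g_f_zero[OF j'(2) m(1)]
      by (simp add: mult_minus_distrib_mat_vec)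
    have "bE j *\<^sub>v (w - f (j + 2) *\<^sub>v m) = bE j *\<^sub>v w - f j *\<^sub>v (shift_mat dJ j *\<^sub>v m)"
      using bE_carrier[OF j] w fm bE_f_vec[OF j m(1)] by (simp add: mult_minus_distrib_mat_vec)
    also have "\<dots> = T" unfolding m(2) u(2) using bw T by (intro eq_vecI) auto
    finally show "bE j *\<^sub>v (w - f (j + 2) *\<^sub>v m) = T" .
  qed
qed

(* Y c lifts the basis vector e_c of Delta(K) to E, and lift_of_shift Y c lifts its image under
   beta; the lifts Y c become the columns of the section. *)
definition lift_of_shift :: "(nat \<Rightarrow> nat \<Rightarrow> 'a vec) \<Rightarrow> nat \<Rightarrow> nat \<Rightarrow> 'a vec" where
  "lift_of_shift Y c j = (if c = 0 then 0\<^sub>v (dE j) else Y (c - 1) j)"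

definition basis_lift :: "(nat \<Rightarrow> nat \<Rightarrow> 'a vec) \<Rightarrow> nat \<Rightarrow> bool" where
  "basis_lift Y c \<longleftrightarrow>
     (\<forall>i\<in>{1..t}. c < dK i \<longrightarrow> Y c i \<in> carrier_vec (dE i) \<and> g i *\<^sub>v Y c i = unit_vec (dK i) c) \<and>
     (\<forall>i\<in>{1..t-1}. c < dK i \<longrightarrow> aE i *\<^sub>v Y c i = Y c (i + 1)) \<and>
     (\<forall>j\<in>{1..t-2}. c < dK (j + 2) \<longrightarrow> bE j *\<^sub>v Y c (j + 2) = lift_of_shift Y c j)"

lemma basis_lift_upd: "c < n \<Longrightarrow> basis_lift Y c \<Longrightarrow> basis_lift (Y(n := W)) c"
  by (simp add: basis_lift_def lift_of_shift_def)

lemma lift_of_shift_upd [simp]: "lift_of_shift (Y(n := W)) n = lift_of_shift Y n"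
  by (auto simp: lift_of_shift_def fun_eq_iff)

lemma lift_of_shift_lifts:
  assumes lifts: "\<forall>c<n. basis_lift Y c" and j: "j \<in> {1..t-2}" and n: "n < dK (j + 2)"
  shows "lift_of_shift Y n j \<in> carrier_vec (dE j)"
    and "g j *\<^sub>v lift_of_shift Y n j = shift_mat dK j *\<^sub>v unit_vec (dK (j + 2)) n"
proof -
  have j': "j \<in> {1..t}" using j by auto
  have "n \<le> dK j" using n std_dim_add_two_le[OF K, of j] by simp
  then have prev:
    "Y (n - 1) j \<in> carrier_vec (dE j) \<and> g j *\<^sub>v Y (n - 1) j = unit_vec (dK j) (n - 1)"
    if "n \<noteq> 0"
    using lifts[rule_format, of "n - 1"] that j' unfolding basis_lift_def by simp
  show "lift_of_shift Y n j \<in> carrier_vec (dE j)" using prev by (simp add: lift_of_shift_def)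
  show "g j *\<^sub>v lift_of_shift Y n j = shift_mat dK j *\<^sub>v unit_vec (dK (j + 2)) n"
    unfolding shift_mat_mult_unit_vec[where D = dK and j = j, OF n]
    using prev g_carrier[OF j'] by (simp add: lift_of_shift_def)
qed

lemma lift_of_shift_aE:
  assumes lifts: "\<forall>c<n. basis_lift Y c" and j: "j \<in> {1..t-1}" and n: "n < dK (j + 2)"
  shows "aE j *\<^sub>v lift_of_shift Y n j = lift_of_shift Y n (j + 1)"
proof -
  have "n \<le> dK j" using n std_dim_add_two_le[OF K, of j] by simp
  then have "aE j *\<^sub>v Y (n - 1) j = Y (n - 1) (j + 1)" if "n \<noteq> 0"
    using lifts[rule_format, of "n - 1"] that j unfolding basis_lift_def by simp
  then show ?thesis using aE_carrier[OF j] by (simp add: lift_of_shift_def)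
qed

lemma lift_at_first_vertex:
  assumes lifts: "\<forall>c<n. basis_lift Y c" and k: "k \<in> K" "k \<le> t" "n < dK k"
  obtains z where "z \<in> carrier_vec (dE k)" "g k *\<^sub>v z = unit_vec (dK k) n"
    "\<And>j. j \<in> {1..t-2} \<Longrightarrow> j + 2 = k \<Longrightarrow> bE j *\<^sub>v z = lift_of_shift Y n j"
proof -
  have k': "k \<in> {1..t}" using K k by (auto simp: standard_subset_def)
  obtain w where w: "w \<in> carrier_vec (dE k)" "g k *\<^sub>v w = unit_vec (dK k) n"
    using g_surj[OF k'] unit_vec_carrier by blast
  show ?thesis
  proof (cases "3 \<le> k")
    case False
    then show ?thesis using that[OF w] by force
  next
    case True
    define j where "j = k - 2"
    have j: "j \<in> {1..t-2}" and kj: "k = j + 2" using True k(2) by (auto simp: j_def)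
    have "j + 1 \<in> J \<or> j + 2 \<in> J" using K_covered k(1) kj by auto
    then have bJ_surj: "dJ j < dJ (j + 2)" by (rule std_dim_less_add_two)
    have n: "n < dK (j + 2)" using k(3) kj by simp
    have "g j *\<^sub>v lift_of_shift Y n j = shift_mat dK j *\<^sub>v (g (j + 2) *\<^sub>v w)"
      using lift_of_shift_lifts(2)[OF lifts j n] w(2) kj by simp
    also have "\<dots> = g j *\<^sub>v (bE j *\<^sub>v w)" using g_bE_vec[OF j] w(1) kj by simp
    finally obtain z where z: "z \<in> carrier_vec (dE k)" "g k *\<^sub>v z = g k *\<^sub>v w"
      "bE j *\<^sub>v z = lift_of_shift Y n j"
      using correct_along_bE[OF j bJ_surj, of w "lift_of_shift Y n j"] w(1) kj
        lift_of_shift_lifts(1)[OF lifts j n] by auto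
    show ?thesis using that[of z] z w(2) kj by auto
  qed
qed

lemma first_vertex_le_2:
  assumes first: "\<And>i. n < dK i \<longleftrightarrow> k \<le> i" and "k \<le> 2"
  shows "n = 0"
proof -
  have "n < dK 2" using first assms(2) by simp
  moreover have "dK 2 \<le> 1"
    using std_dim_add_two_le[OF K, of 0] std_dim_0[OF K] by (simp add: numeral_2_eq_2)
  ultimately show ?thesis by simp
qed

lemma chain_lifts_unit_vec:
  assumes k: "k \<in> {1..t}" and first: "\<And>i. n < dK i \<longleftrightarrow> k \<le> i"
    and z: "z \<in> carrier_vec (dE k)" "g k *\<^sub>v z = unit_vec (dK k) n"
    and i: "k \<le> i" "i \<le> t"
  shows "chain_mult_vec aE k z (i - k) \<in> carrier_vec (dE i)
    \<and> g i *\<^sub>v chain_mult_vec aE k z (i - k) = unit_vec (dK i) n"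
  using i
proof (induction i rule: dec_induct)
  case base
  then show ?case using z by simp
next
  case (step i)
  let ?W = "\<lambda>i. chain_mult_vec aE k z (i - k)"
  have i: "i \<in> {1..t-1}" using step.hyps step.prems k by auto
  have IH: "?W i \<in> carrier_vec (dE i)" "g i *\<^sub>v ?W i = unit_vec (dK i) n"
    using step.IH step.prems by auto
  have W_next: "?W (i + 1) = aE i *\<^sub>v ?W i" using step.hyps(1) by (simp add: chain_mult_vec_Suc_diff)
  have "n < dK i" using first step.hyps(1) by blast
  then have "g (i + 1) *\<^sub>v ?W (i + 1) = unit_vec (dK (i + 1)) n"
    using W_next g_aE_vec[OF i IH(1)] IH(2) by (simp add: incl_mat_mult_unit_vec)
  then show ?case using W_next aE_carrier[OF i] IH(1) by simp
qed

lemma chain_bE: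
  assumes lifts: "\<forall>c<n. basis_lift Y c" and k: "k \<in> {1..t}"
    and first: "\<And>i. n < dK i \<longleftrightarrow> k \<le> i"
    and z: "z \<in> carrier_vec (dE k)" "g k *\<^sub>v z = unit_vec (dK k) n"
      "\<And>j. j \<in> {1..t-2} \<Longrightarrow> j + 2 = k \<Longrightarrow> bE j *\<^sub>v z = lift_of_shift Y n j"
    and j: "j \<in> {1..t-2}" "k \<le> j + 2"
  shows "bE j *\<^sub>v chain_mult_vec aE k z (j + 2 - k) = lift_of_shift Y n j"
  using j
proof (induction j)
  case 0
  then show ?case by simp
next
  case (Suc j)
  let ?W = "\<lambda>i. chain_mult_vec aE k z (i - k)"
  show ?case
  proof (cases "Suc j + 2 = k")
    case True
    then show ?thesis using z(3)[OF Suc.prems(1)] by simp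
  next
    case False
    then have kj: "k \<le> j + 2" using Suc.prems(2) by simp
    have Wj: "?W (j + 2) \<in> carrier_vec (dE (j + 2))"
      using chain_lifts_unit_vec[OF k first z(1,2) kj] Suc.prems(1) by simp
    have W_next: "?W (Suc j + 2) = aE (j + 2) *\<^sub>v ?W (j + 2)"
      using chain_mult_vec_Suc_diff[OF kj] by simp
    show ?thesis
    proof (cases "j = 0")
      case True
      then have "n = 0" using first_vertex_le_2[OF first] kj by simp
      moreover have "?W 2 \<in> carrier_vec (dE 2)" using Wj True by (simp add: numeral_2_eq_2)
      ultimately show ?thesis using W_next bE_1_aE_2_vec True
        by (simp add: lift_of_shift_def numeral_2_eq_2)
    next
      case False
      then have j: "j \<in> {1..t-3}" using Suc.prems(1) by auto
      then have j': "j \<in> {1..t-2}" "j \<in> {1..t-1}" by auto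
      have "bE (Suc j) *\<^sub>v ?W (Suc j + 2) = aE j *\<^sub>v (bE j *\<^sub>v ?W (j + 2))"
        using W_next bE_aE_vec[OF j Wj] by simp
      also have "\<dots> = aE j *\<^sub>v lift_of_shift Y n j"
        using Suc.IH[OF j'(1) kj] by simp
      also have "\<dots> = lift_of_shift Y n (Suc j)"
        using lift_of_shift_aE[OF lifts j'(2)] first[of "j + 2"] kj by simp
      finally show ?thesis by simp
    qed
  qed
qed

lemma propagate_lift:
  assumes lifts: "\<forall>c<n. basis_lift Y c" and k: "k \<in> {1..t}"
    and first: "\<And>i. n < dK i \<longleftrightarrow> k \<le> i"
    and z: "z \<in> carrier_vec (dE k)" "g k *\<^sub>v z = unit_vec (dK k) n"
      "\<And>j. j \<in> {1..t-2} \<Longrightarrow> j + 2 = k \<Longrightarrow> bE j *\<^sub>v z = lift_of_shift Y n j"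
  shows "basis_lift (Y(n := \<lambda>i. chain_mult_vec aE k z (i - k))) n"
  unfolding basis_lift_def
  using chain_lifts_unit_vec[OF k first z(1,2)] chain_bE[OF lifts k first z] first
  by (auto simp: chain_mult_vec_Suc_diff)

lemma basis_lifts_exist: "n \<le> dK t \<Longrightarrow> \<exists>Y. \<forall>c<n. basis_lift Y c"
proof (induction n)
  case 0
  show ?case by simp
next
  case (Suc n)
  then obtain Y where lifts: "\<forall>c<n. basis_lift Y c" by auto
  obtain k where k: "k \<in> K" "k \<le> t" and first: "\<And>i. n < dK i \<longleftrightarrow> k \<le> i"
    using std_dim_first_vertex[OF K] Suc.prems by (metis Suc_le_eq)
  obtain z where z: "z \<in> carrier_vec (dE k)" "g k *\<^sub>v z = unit_vec (dK k) n"
    "\<And>j. j \<in> {1..t-2} \<Longrightarrow> j + 2 = k \<Longrightarrow> bE j *\<^sub>v z = lift_of_shift Y n j"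
    using lift_at_first_vertex[OF lifts k] first by blast
  have "k \<in> {1..t}" using K k by (auto simp: standard_subset_def)
  from propagate_lift[OF lifts this first z]
  have "\<forall>c<Suc n. basis_lift (Y(n := \<lambda>i. chain_mult_vec aE k z (i - k))) c"
    using lifts basis_lift_upd by (auto simp: less_Suc_eq)
  then show ?case by blast
qed

definition section_mat :: "(nat \<Rightarrow> nat \<Rightarrow> 'a vec) \<Rightarrow> nat \<Rightarrow> 'a mat" where
  "section_mat Y i = mat_of_cols (dE i) (map (\<lambda>c. Y c i) [0..<dK i])"

lemma section_mat_carrier: "section_mat Y i \<in> carrier_mat (dE i) (dK i)"
  using mat_of_cols_carrier(1)[of "dE i" "map (\<lambda>c. Y c i) [0..<dK i]"] by (simp add: section_mat_def)

context
  fixes Y assumes lifts: "\<forall>c<dK t. basis_lift Y c"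
begin

lemma lift_at_vertex:
  assumes "i \<in> {1..t}" "c < dK i"
  shows "Y c i \<in> carrier_vec (dE i)" and "g i *\<^sub>v Y c i = unit_vec (dK i) c"
    and "basis_lift Y c"
proof -
  show "basis_lift Y c" using lifts assms std_dim_mono[of i t K] by simp
  then show "Y c i \<in> carrier_vec (dE i)" and "g i *\<^sub>v Y c i = unit_vec (dK i) c"
    using assms unfolding basis_lift_def by auto
qed

lemma col_section_mat: "i \<in> {1..t} \<Longrightarrow> c < dK i \<Longrightarrow> col (section_mat Y i) c = Y c i"
  using lift_at_vertex(1) by (simp add: section_mat_def)

lemma section_mat_mult_unit_vec:
  "i \<in> {1..t} \<Longrightarrow> c < dK i \<Longrightarrow> section_mat Y i *\<^sub>v unit_vec (dK i) c = Y c i"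
  using mult_unit_vec_eq_col[OF section_mat_carrier] col_section_mat by simp

lemma section_mat_aE:
  assumes i: "i \<in> {1..t-1}"
  shows "section_mat Y (i + 1) * incl_mat dK i = aE i * section_mat Y i"
proof (rule mat_col_eqI)
  fix c assume "c < dim_col (aE i * section_mat Y i)"
  then have c: "c < dK i" using section_mat_carrier[of Y i] by simp
  have i': "i \<in> {1..t}" "i + 1 \<in> {1..t}" using i by auto
  have c': "c < dK (i + 1)" using c std_dim_mono[of i "i + 1" K] by simp
  have "col (section_mat Y (i + 1) * incl_mat dK i) c
      = section_mat Y (i + 1) *\<^sub>v unit_vec (dK (i + 1)) c"
    using col_mult2[OF section_mat_carrier[of Y "i + 1"] incl_mat_carrier[of dK i] c] c
    by (simp add: col_incl_mat)
  also have "\<dots> = Y c (i + 1)" using section_mat_mult_unit_vec[OF i'(2) c'] .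
  also have "\<dots> = aE i *\<^sub>v Y c i"
    using lift_at_vertex(3)[OF i'(1) c] i c unfolding basis_lift_def by simp
  also have "\<dots> = col (aE i * section_mat Y i) c"
    using col_mult2[OF aE_carrier[OF i] section_mat_carrier c] col_section_mat[OF i'(1) c] by simp
  finally show "col (section_mat Y (i + 1) * incl_mat dK i) c = col (aE i * section_mat Y i) c" .
qed (use aE_carrier[OF i] section_mat_carrier[of Y i] section_mat_carrier[of Y "i + 1"]
    in \<open>simp_all add: incl_mat_def\<close>)

lemma section_mat_bE:
  assumes j: "j \<in> {1..t-2}"
  shows "section_mat Y j * shift_mat dK j = bE j * section_mat Y (j + 2)"
proof (rule mat_col_eqI)
  fix c assume "c < dim_col (bE j * section_mat Y (j + 2))"
  then have c: "c < dK (j + 2)" using section_mat_carrier[of Y "j + 2"] by simp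
  have j': "j \<in> {1..t}" "j + 2 \<in> {1..t}" using j by auto
  have "col (section_mat Y j * shift_mat dK j) c = section_mat Y j *\<^sub>v col (shift_mat dK j) c"
    using col_mult2[OF section_mat_carrier[of Y j] shift_mat_carrier[of dK j] c] .
  also have "\<dots> = lift_of_shift Y c j"
  proof (cases "c = 0")
    case True
    then show ?thesis using c section_mat_carrier[of Y j]
      by (simp add: lift_of_shift_def col_shift_mat)
  next
    case False
    then have "c - 1 < dK j" using c std_dim_add_two_le[OF K, of j] by simp
    then show ?thesis using False c section_mat_mult_unit_vec[OF j'(1)]
      by (simp add: lift_of_shift_def col_shift_mat)
  qed
  also have "\<dots> = bE j *\<^sub>v Y c (j + 2)"
    using lift_at_vertex(3)[OF j'(2) c] j c unfolding basis_lift_def by simp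
  also have "\<dots> = col (bE j * section_mat Y (j + 2)) c"
    using col_mult2[OF bE_carrier[OF j] section_mat_carrier c] col_section_mat[OF j'(2) c] by simp
  finally show "col (section_mat Y j * shift_mat dK j) c = col (bE j * section_mat Y (j + 2)) c" .
qed (use bE_carrier[OF j] section_mat_carrier[of Y j] section_mat_carrier[of Y "j + 2"]
    in \<open>simp_all add: shift_mat_def\<close>)

lemma g_section_mat:
  assumes i: "i \<in> {1..t}"
  shows "g i * section_mat Y i = 1\<^sub>m (dK i)"
proof (rule mat_col_eqI)
  fix c assume "c < dim_col (1\<^sub>m (dK i) :: 'a mat)"
  then have c: "c < dK i" by simp
  have "col (g i * section_mat Y i) c = g i *\<^sub>v Y c i"
    using col_mult2[OF g_carrier[OF i] section_mat_carrier c] col_section_mat[OF i c] by simp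
  also have "\<dots> = col (1\<^sub>m (dK i)) c" using lift_at_vertex(2)[OF i c] c by simp
  finally show "col (g i * section_mat Y i) c = col (1\<^sub>m (dK i)) c" .
qed (use g_carrier[OF i] section_mat_carrier[of Y i] in auto)

end

lemma extension_splits:
  "\<exists>s. is_hom t (std_module K) (dE, aE, bE) s \<and> (\<forall>i\<in>{1..t}. g i * s i = 1\<^sub>m (dK i))"
proof -
  obtain Y where lifts: "\<forall>c<dK t. basis_lift Y c" using basis_lifts_exist by blast
  have "is_hom t (std_module K) (dE, aE, bE) (section_mat Y)"
    unfolding is_hom_def std_module_eq
    using section_mat_carrier section_mat_aE[OF lifts] section_mat_bE[OF lifts] by simp
  then show ?thesis using g_section_mat[OF lifts] by blast
qed

end

theorem lemma2p6:
  fixes t :: nat and J K :: "nat set"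
  assumes "alg_closed_field TYPE('a::field)"
    and "t \<ge> 3"
    and "standard_subset t J" and "J \<noteq> {}"
    and "standard_subset t K" and "K \<noteq> {}"
    and "\<forall>i\<in>K. i \<in> J \<or> i - 1 \<in> J"
  shows "ext1_zero t (std_module K :: 'a rep) (std_module J)"
  unfolding ext1_zero_def
proof (intro allI impI)
  fix E :: "'a rep" and f g
  assume E: "is_rep t E \<and> short_exact t (std_module J) E (std_module K) f g"
  obtain dE aE bE where E_eq: "E = (dE, aE, bE)" by (cases E)
  interpret standard_extension t J K dE aE bE f g
    using E assms unfolding E_eq by unfold_locales auto
  show "\<exists>s. is_hom t (std_module K) E s \<and> (\<forall>i\<in>{1..t}. g i * s i = 1\<^sub>m (fst (std_module K :: 'a rep) i))"
    using extension_splits unfolding E_eq by (simp add: std_module_eq)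
qed

end
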